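(* Let $\Gamma\subset SU(2)$ be finite and $\mathbb{V}=(\mathbb{C}^2\setminus\{0\})/\Gamma$ with its standard complex structure, flat metric $g_0$ and Levi-Civita connection $\nabla_0$, and let $S^1=\{\lambda\in\mathbb{C}:|\lambda|=1\}$ act on $\mathbb{V}$ by scalar multiplication. Let $\gamma\in\Omega^1(\mathbb{V})$ be $S^1$-invariant, with $d\gamma$ of type $(1,1)$ and $|\nabla_0^k\gamma|_{g_0}=O(r^{-3-k})$ as $r\to\infty$ for all $k\ge0$, where $r=\|\cdot\|$. Then there is an $S^1$-invariant $\psi\in C^\infty(\mathbb{V})$ such that $d\gamma=\sqrt{-1}\partial\bar\partial\psi$ and $|\nabla_0^k\psi|_{g_0}=O(r^{-2-k})$ as $r\to\infty$ for all $k\ge0$. *)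

theory Defs
  imports "HOL-Analysis.Analysis" "HOL-Library.Landau_Symbols"
begin

text \<open>Points of C^2 are vectors of type complex^2 (a real normed vector space of real
dimension 4). All derivatives are real (Frechet) derivatives.\<close>

definition conj_transpose :: "complex^2^2 \<Rightarrow> complex^2^2" where
  "conj_transpose A = (\<chi> i j. cnj (A $ j $ i))"

definition SU2 :: "(complex^2^2) set" where
  "SU2 = {A. A ** conj_transpose A = mat 1 \<and> det A = 1}"

definition dirD :: "('a::real_normed_vector \<Rightarrow> 'b::real_normed_vector) \<Rightarrow> 'a \<Rightarrow> 'a \<Rightarrow> 'b" where
  "dirD f v x = frechet_derivative f (at x) v"

fun pd :: "'a::real_normed_vector list \<Rightarrow> ('a \<Rightarrow> 'b::real_normed_vector) \<Rightarrow> 'a \<Rightarrow> 'b" where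
  "pd [] f = f"
| "pd (v # vs) f = dirD (pd vs f) v"

definition smooth_on :: "'a::real_normed_vector set \<Rightarrow> ('a \<Rightarrow> 'b::real_normed_vector) \<Rightarrow> bool" where
  "smooth_on U f \<longleftrightarrow> (\<forall>vs. \<forall>x\<in>U. pd vs f differentiable (at x))"

text \<open>A smooth real 1-form on U: at each point a real-linear functional,
  with smooth coefficients (gamma x v = gamma_x(v)).\<close>
definition smooth_1form_on :: "'a::real_normed_vector set \<Rightarrow> ('a \<Rightarrow> 'a \<Rightarrow> 'b::real_normed_vector) \<Rightarrow> bool" where
  "smooth_1form_on U \<gamma> \<longleftrightarrow> (\<forall>x\<in>U. linear (\<gamma> x)) \<and> (\<forall>v. smooth_on U (\<lambda>x. \<gamma> x v))"

definition extd :: "('a::real_normed_vector \<Rightarrow> 'a \<Rightarrow> 'b::real_normed_vector) \<Rightarrow> 'a \<Rightarrow> 'a \<Rightarrow> 'a \<Rightarrow> 'b" where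
  "extd \<alpha> x u v = dirD (\<lambda>y. \<alpha> y v) u x - dirD (\<lambda>y. \<alpha> y u) v x"

definition Jmul :: "complex^2 \<Rightarrow> complex^2" where
  "Jmul v = \<i> *s v"

text \<open>A real 2-form omega on C^2 is of type (1,1) iff omega(Ju,Jv) = omega(u,v).\<close>
definition type11_on :: "(complex^2) set \<Rightarrow> (complex^2 \<Rightarrow> complex^2 \<Rightarrow> complex^2 \<Rightarrow> real) \<Rightarrow> bool" where
  "type11_on U \<omega> \<longleftrightarrow> (\<forall>x\<in>U. \<forall>u v. \<omega> x (Jmul u) (Jmul v) = \<omega> x u v)"

definition dbar :: "(complex^2 \<Rightarrow> real) \<Rightarrow> complex^2 \<Rightarrow> complex^2 \<Rightarrow> complex" where
  "dbar \<psi> x v = (complex_of_real (dirD \<psi> v x) + \<i> * complex_of_real (dirD \<psi> (Jmul v) x)) / 2"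

text \<open>sqrt(-1) d dbar psi = sqrt(-1) (partial dbar psi), as a (complex-valued, in fact real) 2-form.\<close>
definition i_ddbar :: "(complex^2 \<Rightarrow> real) \<Rightarrow> complex^2 \<Rightarrow> complex^2 \<Rightarrow> complex^2 \<Rightarrow> complex" where
  "i_ddbar \<psi> x u v = \<i> * extd (dbar \<psi>) x u v"

end

(*
  Let xi z = i z generate the circle action and H = gamma(xi). Invariance gives L_xi gamma = 0,
  so i_xi (d gamma) = - dH by Cartan's formula; since d gamma has type (1,1) this becomes
  d gamma (z, w) = - D_(iw) H (z), and one more derivative gives
  D_v D_(iu) H - D_u D_(iv) H = (2 + r d/dr) d gamma (u, v).
  As 2 i ddbar psi (u, v) = D_v D_(iu) psi - D_u D_(iv) psi, it remains to invert 2 + r d/dr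
  on functions decaying faster than r^-2. The radial integral
  psi x = -2 int_1^oo H (t x) dt / t does this: it converges since H = O(r^-2), and it
  commutes with derivatives up to a change of the power of t in the integrand, so psi and all
  its derivatives decay one order more slowly than the corresponding ones of gamma.
*)

theory Submission
  imports Defs
begin

section \<open>Directional derivatives\<close>

lemma dirD_cong_open:
  assumes "open U" "x \<in> U" "\<And>y. y \<in> U \<Longrightarrow> f y = g y"
  shows "dirD f v x = dirD g v x"
proof -
  have "(f has_derivative D) (at x) \<longleftrightarrow> (g has_derivative D) (at x)" for D
    using has_derivative_transform_within_open[OF _ assms(1,2)] assms(3) by metis
  then show ?thesis
    unfolding dirD_def frechet_derivative_def by simp
qed

lemma differentiable_cong_open:
  assumes "open U" "x \<in> U" "\<And>y. y \<in> U \<Longrightarrow> f y = g y" "f differentiable at x"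
  shows "g differentiable at x"
  using has_derivative_transform_within_open[OF _ assms(1,2)] assms(3,4)
  unfolding differentiable_def by metis

lemma pd_cong_open:
  assumes "open U" "x \<in> U" "\<And>y. y \<in> U \<Longrightarrow> f y = g y"
  shows "pd vs f x = pd vs g x"
  using assms(2)
proof (induction vs arbitrary: x)
  case (Cons v vs)
  then show ?case
    using dirD_cong_open[OF assms(1) Cons.prems Cons.IH] by simp
qed (use assms(3) in simp)

lemma pd_append: "pd (vs @ ws) f = pd vs (pd ws f)"
  by (induction vs) auto

lemma has_derivative_dirD:
  "f differentiable at x \<Longrightarrow> (f has_derivative (\<lambda>v. dirD f v x)) (at x)"
  unfolding dirD_def using frechet_derivative_works by metis

lemma dirD_eqI: "(f has_derivative f') (at x) \<Longrightarrow> dirD f v x = f' v"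
  unfolding dirD_def using frechet_derivative_at by metis

lemma linear_dirD: "f differentiable at x \<Longrightarrow> linear (\<lambda>v. dirD f v x)"
  using has_derivative_dirD has_derivative_linear by blast

lemma smooth_on_pd: "smooth_on U f \<Longrightarrow> smooth_on U (pd vs f)"
  unfolding smooth_on_def by (simp add: pd_append[symmetric])

lemma pd_zero [simp]: "pd vs (\<lambda>y. 0) = (\<lambda>y. 0)"
  by (induction vs) (auto simp: dirD_def)

lemma pd_lincomb:
  fixes f g :: "'a::real_normed_vector \<Rightarrow> real"
  assumes U: "open U" "x \<in> U" and f: "smooth_on U f" and g: "smooth_on U g"
  shows "pd vs (\<lambda>y. a * f y + g y) x = a * pd vs f x + pd vs g x"
  using U(2)
proof (induction vs arbitrary: x)
  case (Cons v vs)
  have "((\<lambda>y. a * pd vs f y + pd vs g y) has_derivative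
          (\<lambda>w. a * dirD (pd vs f) w x + dirD (pd vs g) w x)) (at x)"
    using f g Cons.prems unfolding smooth_on_def
    by (intro has_derivative_add has_derivative_mult_right has_derivative_dirD) auto
  then have "dirD (\<lambda>y. a * pd vs f y + pd vs g y) v x = a * dirD (pd vs f) v x + dirD (pd vs g) v x"
    by (rule dirD_eqI)
  then show ?case
    using dirD_cong_open[OF U(1) Cons.prems Cons.IH] by simp
qed simp

lemma smooth_on_lincomb:
  fixes f g :: "'a::real_normed_vector \<Rightarrow> real"
  assumes U: "open U" and f: "smooth_on U f" and g: "smooth_on U g"
  shows "smooth_on U (\<lambda>y. a * f y + g y)"
  unfolding smooth_on_def
proof (intro allI ballI)
  fix vs x
  assume x: "x \<in> U"
  have "pd vs f differentiable at x" "pd vs g differentiable at x"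
    using f g x unfolding smooth_on_def by auto
  then have "(\<lambda>y. a * pd vs f y + pd vs g y) differentiable at x"
    by (intro differentiable_add differentiable_mult differentiable_const)
  then show "pd vs (\<lambda>y. a * f y + g y) differentiable at x"
    by (rule differentiable_cong_open[OF U x, rotated]) (simp add: pd_lincomb[OF U _ f g])
qed

lemma pd_scale:
  fixes f :: "'a::real_normed_vector \<Rightarrow> real"
  assumes "open U" "x \<in> U" "smooth_on U f"
  shows "pd vs (\<lambda>y. a * f y) x = a * pd vs f x"
  using pd_lincomb[OF assms, of "\<lambda>y. 0"] by (simp add: smooth_on_def)

lemma linear_eq_sum_Basis:
  fixes L :: "'a::euclidean_space \<Rightarrow> real"
  assumes "linear L"
  shows "L w = (\<Sum>b\<in>Basis. (w \<bullet> b) * L b)"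
proof -
  have "L w = L (\<Sum>b\<in>Basis. (w \<bullet> b) *\<^sub>R b)"
    by (simp add: euclidean_representation)
  also have "\<dots> = (\<Sum>b\<in>Basis. (w \<bullet> b) * L b)"
    using assms by (simp add: linear_sum linear_scale)
  finally show ?thesis .
qed

lemma linear_dirD_family:
  fixes F :: "'a::real_normed_vector \<Rightarrow> 'b::real_normed_vector \<Rightarrow> real"
  assumes U: "open U" "y \<in> U" and lin: "\<And>z. z \<in> U \<Longrightarrow> linear (F z)"
    and dif: "\<And>w. (\<lambda>z. F z w) differentiable at y"
  shows "linear (\<lambda>w. dirD (\<lambda>z. F z w) u y)"
proof (rule linearI)
  fix w1 w2
  have "((\<lambda>z. F z w1 + F z w2) has_derivative
          (\<lambda>u. dirD (\<lambda>z. F z w1) u y + dirD (\<lambda>z. F z w2) u y)) (at y)"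
    by (intro has_derivative_add has_derivative_dirD dif)
  then have "dirD (\<lambda>z. F z w1 + F z w2) u y = dirD (\<lambda>z. F z w1) u y + dirD (\<lambda>z. F z w2) u y"
    by (rule dirD_eqI)
  moreover have "dirD (\<lambda>z. F z (w1 + w2)) u y = dirD (\<lambda>z. F z w1 + F z w2) u y"
    by (rule dirD_cong_open[OF U]) (simp add: lin linear_add)
  ultimately show "dirD (\<lambda>z. F z (w1 + w2)) u y = dirD (\<lambda>z. F z w1) u y + dirD (\<lambda>z. F z w2) u y"
    by simp
next
  fix c :: real and w
  have "((\<lambda>z. c * F z w) has_derivative (\<lambda>u. c * dirD (\<lambda>z. F z w) u y)) (at y)"
    by (intro has_derivative_mult_right has_derivative_dirD dif)
  then have "dirD (\<lambda>z. c * F z w) u y = c * dirD (\<lambda>z. F z w) u y"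
    by (rule dirD_eqI)
  moreover have "dirD (\<lambda>z. F z (c *\<^sub>R w)) u y = dirD (\<lambda>z. c * F z w) u y"
    by (rule dirD_cong_open[OF U]) (simp add: lin linear_scale)
  ultimately show "dirD (\<lambda>z. F z (c *\<^sub>R w)) u y = c *\<^sub>R dirD (\<lambda>z. F z w) u y"
    by simp
qed

lemma has_derivative_linear_family:
  fixes F :: "'a::euclidean_space \<Rightarrow> 'a \<Rightarrow> real" and p q :: "'b::real_normed_vector \<Rightarrow> 'a"
  assumes U: "open U" "p x \<in> U" and lin: "\<And>z. z \<in> U \<Longrightarrow> linear (F z)"
    and dif: "\<And>w. (\<lambda>z. F z w) differentiable at (p x)"
    and p: "(p has_derivative p') (at x)" and q: "(q has_derivative q') (at x)"
  shows "((\<lambda>t. F (p t) (q t)) has_derivative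
           (\<lambda>h. dirD (\<lambda>z. F z (q x)) (p' h) (p x) + F (p x) (q' h))) (at x)"
proof -
  have "\<forall>\<^sub>F t in at x. p t \<in> U"
    using has_derivative_continuous[OF p] U unfolding isCont_def
    by (simp add: tendsto_def eventually_at_filter)
  then obtain d where "d > 0" "\<And>t. t \<noteq> x \<Longrightarrow> dist t x < d \<Longrightarrow> p t \<in> U"
    unfolding eventually_at by auto
  then have d: "d > 0" "\<And>t. dist t x < d \<Longrightarrow> p t \<in> U"
    using U(2) by metis+
  have Fb: "((\<lambda>t. F (p t) b) has_derivative (\<lambda>h. dirD (\<lambda>z. F z b) (p' h) (p x))) (at x)" for b
    using has_derivative_compose[OF p has_derivative_dirD[OF dif[of b]]] by simp
  have D: "((\<lambda>t. \<Sum>b\<in>Basis. (q t \<bullet> b) * F (p t) b) has_derivative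
     (\<lambda>h. \<Sum>b\<in>Basis. (q x \<bullet> b) * dirD (\<lambda>z. F z b) (p' h) (p x) + (q' h \<bullet> b) * F (p x) b)) (at x)"
    by (rule has_derivative_sum, rule has_derivative_mult[OF has_derivative_inner_left[OF q] Fb])
  have "(\<lambda>h. \<Sum>b\<in>Basis. (q x \<bullet> b) * dirD (\<lambda>z. F z b) (p' h) (p x) + (q' h \<bullet> b) * F (p x) b)
       = (\<lambda>h. dirD (\<lambda>z. F z (q x)) (p' h) (p x) + F (p x) (q' h))"
  proof
    fix h
    show "(\<Sum>b\<in>Basis. (q x \<bullet> b) * dirD (\<lambda>z. F z b) (p' h) (p x) + (q' h \<bullet> b) * F (p x) b)
       = dirD (\<lambda>z. F z (q x)) (p' h) (p x) + F (p x) (q' h)"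
      using linear_eq_sum_Basis[OF linear_dirD_family[OF U lin dif, where u="p' h"], of "q x"]
        linear_eq_sum_Basis[OF lin[OF U(2)], of "q' h"]
      by (simp add: sum.distrib)
  qed
  note D = D[unfolded this]
  show ?thesis
  proof (rule has_derivative_transform_within[OF D d(1)])
    show "(\<Sum>b\<in>Basis. (q t \<bullet> b) * F (p t) b) = F (p t) (q t)" if "dist t x < d" for t
      using linear_eq_sum_Basis[OF lin[OF d(2)[OF that]], of "q t"] by simp
  qed simp
qed

lemma has_real_derivative_along_line:
  assumes "f differentiable at (x + s *\<^sub>R u)"
  shows "((\<lambda>s. f (x + s *\<^sub>R u)) has_real_derivative dirD f u (x + s *\<^sub>R u)) (at s)"
proof -
  have "((\<lambda>s. x + s *\<^sub>R u) has_derivative (\<lambda>h. h *\<^sub>R u)) (at s)"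
    by (intro derivative_eq_intros) auto
  from has_derivative_compose[OF this has_derivative_dirD[OF assms]]
  have "((\<lambda>s. f (x + s *\<^sub>R u)) has_derivative (\<lambda>h. dirD f (h *\<^sub>R u) (x + s *\<^sub>R u))) (at s)"
    by simp
  moreover have "(\<lambda>h. dirD f (h *\<^sub>R u) (x + s *\<^sub>R u)) = (*) (dirD f u (x + s *\<^sub>R u))"
    using linear_scale[OF linear_dirD[OF assms], of _ u] by (simp add: fun_eq_iff mult.commute)
  ultimately show ?thesis
    unfolding has_field_derivative_def by simp
qed

section \<open>Symmetry of second derivatives\<close>

lemma second_difference_eq_mixed_pd:
  fixes f :: "'a::real_normed_vector \<Rightarrow> real"
  assumes h: "h > 0" and f: "smooth_on U f"
    and square: "\<And>s t. 0 \<le> s \<Longrightarrow> s \<le> h \<Longrightarrow> 0 \<le> t \<Longrightarrow> t \<le> h \<Longrightarrow>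
      x + s *\<^sub>R u + t *\<^sub>R v \<in> U"
  obtains s t where "0 < s" "s < h" "0 < t" "t < h"
    "f (x + h *\<^sub>R u + h *\<^sub>R v) - f (x + h *\<^sub>R u) - f (x + h *\<^sub>R v) + f x
       = h * h * pd [v, u] f (x + s *\<^sub>R u + t *\<^sub>R v)"
proof -
  have dif: "pd ws f differentiable at (x + s *\<^sub>R u + t *\<^sub>R v)"
    if "0 \<le> s" "s \<le> h" "0 \<le> t" "t \<le> h" for ws s t
    using f square[OF that] unfolding smooth_on_def by blast
  define G where "G s = f ((x + h *\<^sub>R v) + s *\<^sub>R u) - f (x + s *\<^sub>R u)" for s
  have "DERIV G s :> dirD f u ((x + h *\<^sub>R v) + s *\<^sub>R u) - dirD f u (x + s *\<^sub>R u)"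
    if "0 \<le> s" "s \<le> h" for s
    unfolding G_def
    using dif[of s h "[]"] dif[of s 0 "[]"] that h
    by (intro DERIV_diff has_real_derivative_along_line) (simp_all add: algebra_simps)
  from MVT2[OF h this] obtain s where s: "0 < s" "s < h"
    "G h - G 0 = (h - 0) * (dirD f u ((x + h *\<^sub>R v) + s *\<^sub>R u) - dirD f u (x + s *\<^sub>R u))"
    by blast
  define K where "K t = pd [u] f ((x + s *\<^sub>R u) + t *\<^sub>R v)" for t
  have "DERIV K t :> pd [v, u] f ((x + s *\<^sub>R u) + t *\<^sub>R v)" if "0 \<le> t" "t \<le> h" for t
    unfolding K_def using dif[of s t "[u]"] that s by (simp add: has_real_derivative_along_line)
  from MVT2[OF h this] obtain t where t: "0 < t" "t < h"
    "K h - K 0 = (h - 0) * pd [v, u] f ((x + s *\<^sub>R u) + t *\<^sub>R v)"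
    by blast
  have "f (x + h *\<^sub>R u + h *\<^sub>R v) - f (x + h *\<^sub>R u) - f (x + h *\<^sub>R v) + f x = G h - G 0"
    unfolding G_def by (simp add: algebra_simps)
  also have "\<dots> = h * (K h - K 0)"
    using s(3) unfolding K_def by (simp add: algebra_simps)
  also have "\<dots> = h * h * pd [v, u] f (x + s *\<^sub>R u + t *\<^sub>R v)"
    using t(3) by simp
  finally show ?thesis
    using that s t by blast
qed

lemma mixed_pd_values_meet:
  fixes f :: "'a::real_normed_vector \<Rightarrow> real"
  assumes U: "open U" "x \<in> U" and f: "smooth_on U f" and e: "e > 0"
  obtains p q where "dist p x < e" "dist q x < e" "pd [v, u] f p = pd [u, v] f q"
proof -
  obtain r where r: "r > 0" "ball x r \<subseteq> U"
    using U open_contains_ball by blast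
  define d where "d = min r e"
  have d: "d > 0" "d \<le> e" "ball x d \<subseteq> U"
    using r e unfolding d_def by (auto simp: subset_iff)
  define M where "M = norm u + norm v + 1"
  have M: "M > 0"
    unfolding M_def by (simp add: add_nonneg_pos)
  define h where "h = d / (2 * M)"
  have h: "h > 0"
    using d M unfolding h_def by simp
  have "h * (norm u + norm v) \<le> h * M"
    using h unfolding M_def by simp
  also have "\<dots> < d"
    using d M unfolding h_def by simp
  finally have h_small: "h * (norm u + norm v) < d" .
  have close: "dist (x + s *\<^sub>R a + t *\<^sub>R b) x < d"
    if "0 \<le> s" "s \<le> h" "0 \<le> t" "t \<le> h" "{a, b} = {u, v}" for a b s t
  proof -
    have "dist (x + s *\<^sub>R a + t *\<^sub>R b) x \<le> s * norm a + t * norm b"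
      using that norm_triangle_ineq[of "s *\<^sub>R a" "t *\<^sub>R b"] by (simp add: dist_norm)
    also have "\<dots> \<le> h * norm a + h * norm b"
      using that by (intro add_mono mult_right_mono) auto
    also have "\<dots> = h * (norm u + norm v)"
      using that(5) by (auto simp: doubleton_eq_iff algebra_simps)
    finally show ?thesis
      using h_small by simp
  qed
  have square: "x + s *\<^sub>R u + t *\<^sub>R v \<in> U" "x + s *\<^sub>R v + t *\<^sub>R u \<in> U"
    if "0 \<le> s" "s \<le> h" "0 \<le> t" "t \<le> h" for s t
    using close[OF that, of u v] close[OF that, of v u] d(3)
    by (auto simp: dist_commute subset_iff insert_commute)
  obtain s1 t1 where st1: "0 < s1" "s1 < h" "0 < t1" "t1 < h"
    "f (x + h *\<^sub>R u + h *\<^sub>R v) - f (x + h *\<^sub>R u) - f (x + h *\<^sub>R v) + f x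
       = h * h * pd [v, u] f (x + s1 *\<^sub>R u + t1 *\<^sub>R v)"
    by (rule second_difference_eq_mixed_pd[OF h f square(1)])
  obtain s2 t2 where st2: "0 < s2" "s2 < h" "0 < t2" "t2 < h"
    "f (x + h *\<^sub>R v + h *\<^sub>R u) - f (x + h *\<^sub>R v) - f (x + h *\<^sub>R u) + f x
       = h * h * pd [u, v] f (x + s2 *\<^sub>R v + t2 *\<^sub>R u)"
    by (rule second_difference_eq_mixed_pd[OF h f square(2)])
  show ?thesis
  proof (rule that)
    show "dist (x + s1 *\<^sub>R u + t1 *\<^sub>R v) x < e" "dist (x + s2 *\<^sub>R v + t2 *\<^sub>R u) x < e"
      using close[where s = s1 and t = t1 and a = u and b = v]
        close[where s = s2 and t = t2 and a = v and b = u] st1 st2 d(2)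
      by (auto simp: insert_commute)
    show "pd [v, u] f (x + s1 *\<^sub>R u + t1 *\<^sub>R v) = pd [u, v] f (x + s2 *\<^sub>R v + t2 *\<^sub>R u)"
      using st1(5) st2(5) h by (simp add: algebra_simps)
  qed
qed

lemma pd_commute:
  fixes f :: "'a::real_normed_vector \<Rightarrow> real"
  assumes U: "open U" "x \<in> U" and f: "smooth_on U f"
  shows "pd [u, v] f x = pd [v, u] f x"
proof (rule ccontr)
  assume "pd [u, v] f x \<noteq> pd [v, u] f x"
  then have e: "\<bar>pd [u, v] f x - pd [v, u] f x\<bar> / 2 > 0" (is "?e > 0")
    by simp
  have "isCont (pd ws f) x" for ws
    using f U(2) unfolding smooth_on_def by (blast intro: differentiable_imp_continuous_within)
  then have "\<exists>d>0. \<forall>y. dist y x < d \<longrightarrow> dist (pd ws f y) (pd ws f x) < ?e" for ws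
    using e unfolding continuous_at_eps_delta by blast
  then obtain d1 d2 where d: "d1 > 0" "d2 > 0"
    "\<And>y. dist y x < d1 \<Longrightarrow> dist (pd [u, v] f y) (pd [u, v] f x) < ?e"
    "\<And>y. dist y x < d2 \<Longrightarrow> dist (pd [v, u] f y) (pd [v, u] f x) < ?e"
    by meson
  obtain p q where "dist p x < min d1 d2" "dist q x < min d1 d2" "pd [v, u] f p = pd [u, v] f q"
    by (rule mixed_pd_values_meet[OF U f, where e = "min d1 d2" and u = u and v = v]) (use d in simp)
  then show False
    using d(3)[of q] d(4)[of p] by (simp add: dist_real_def abs_if split: if_splits)
qed

section \<open>Decay at infinity\<close>

lemma eventually_nonzero_at_infinity: "\<forall>\<^sub>F x in at_infinity. (x::'a::real_normed_vector) \<noteq> 0"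
  unfolding eventually_at_infinity by (rule exI[of _ 1]) auto

lemma bigo_norm_powrE:
  fixes f :: "'a::real_normed_vector \<Rightarrow> real"
  assumes "f \<in> O[at_infinity](\<lambda>x. norm x powr e)"
  obtains C R where "C \<ge> 0" "R > 0" "\<And>y. R \<le> norm y \<Longrightarrow> \<bar>f y\<bar> \<le> C * norm y powr e"
proof -
  obtain C where "C > 0" "\<forall>\<^sub>F x in at_infinity. norm (f x) \<le> C * norm (norm x powr e)"
    using assms by (elim landau_o.bigE)
  then obtain R where "\<And>y. R \<le> norm y \<Longrightarrow> \<bar>f y\<bar> \<le> C * norm y powr e"
    unfolding eventually_at_infinity by auto
  then show ?thesis
    using that[of C "max R 1"] \<open>C > 0\<close> by simp
qed

lemma bigo_norm_powrI:
  fixes f :: "'a::real_normed_vector \<Rightarrow> real"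
  assumes "\<And>y. R \<le> norm y \<Longrightarrow> \<bar>f y\<bar> \<le> C * norm y powr e"
  shows "f \<in> O[at_infinity](\<lambda>x. norm x powr e)"
proof (rule bigoI[of _ C])
  show "\<forall>\<^sub>F x in at_infinity. norm (f x) \<le> C * norm (norm x powr e)"
    unfolding eventually_at_infinity using assms by auto
qed

lemma bigo_norm_powr_linear_mult:
  fixes l :: "'a::real_normed_vector \<Rightarrow> real"
  assumes l: "bounded_linear l" and f: "f \<in> O[at_infinity](\<lambda>x. norm x powr e)"
  shows "(\<lambda>y. l y * f y) \<in> O[at_infinity](\<lambda>x. norm x powr (e + 1))"
proof -
  obtain K where "\<And>y. norm (l y) \<le> norm y * K"
    using bounded_linear.bounded[OF l] by blast
  then have "l \<in> O[at_infinity](\<lambda>x. norm x)"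
    by (intro bigoI[of _ K]) (simp add: mult.commute)
  from landau_o.big.mult[OF this f]
  have prod: "(\<lambda>y. l y * f y) \<in> O[at_infinity](\<lambda>x. norm x * norm x powr e)" .
  have "\<forall>\<^sub>F x in at_infinity. norm x * norm x powr e = norm x powr (e + 1)"
    using eventually_nonzero_at_infinity by eventually_elim (simp add: powr_add)
  then have eq: "O[at_infinity](\<lambda>x. norm x * norm x powr e) = O[at_infinity](\<lambda>x. norm x powr (e + 1))"
    by (rule landau_o.big.cong)
  show ?thesis
    using prod unfolding eq .
qed

definition decays :: "real \<Rightarrow> ('a::real_normed_vector \<Rightarrow> real) \<Rightarrow> bool" where
  "decays m f \<longleftrightarrow> smooth_on (-{0}) f \<and>
     (\<forall>vs. pd vs f \<in> O[at_infinity](\<lambda>x. norm x powr (- m - real (length vs))))"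

lemma open_punctured: "open (-{0::'a::real_normed_vector})"
  by (simp add: open_Compl)

lemma decays_smooth_on: "decays m f \<Longrightarrow> smooth_on (-{0}) f"
  unfolding decays_def by blast

lemma decays_differentiable: "decays m f \<Longrightarrow> x \<noteq> 0 \<Longrightarrow> pd vs f differentiable at x"
  unfolding decays_def smooth_on_def by blast

lemma decays_continuous_on: "decays m f \<Longrightarrow> continuous_on (-{0}) (pd vs f)"
  by (intro continuous_at_imp_continuous_on ballI differentiable_imp_continuous_within
      decays_differentiable) auto

lemma decays_bigo:
  "decays m f \<Longrightarrow> pd vs f \<in> O[at_infinity](\<lambda>x. norm x powr (- m - real (length vs)))"
  unfolding decays_def by blast

lemma decays_pd:
  assumes "decays m f"
  shows "decays (m + real (length vs)) (pd vs f)"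
  unfolding decays_def
proof (intro conjI allI)
  show "smooth_on (-{0}) (pd vs f)"
    using smooth_on_pd decays_smooth_on[OF assms] .
  show "pd ws (pd vs f) \<in> O[at_infinity](\<lambda>x. norm x powr (- (m + real (length vs)) - real (length ws)))"
    for ws using decays_bigo[OF assms, of "ws @ vs"] by (simp add: pd_append algebra_simps)
qed

lemma decays_cong:
  assumes f: "decays m f" and eq: "\<And>y. y \<noteq> 0 \<Longrightarrow> f y = g y"
  shows "decays m g"
proof -
  have pd_eq: "pd vs f y = pd vs g y" if "y \<noteq> 0" for vs y
    by (rule pd_cong_open[OF open_punctured]) (use eq that in auto)
  show ?thesis
    unfolding decays_def smooth_on_def
  proof (intro conjI allI ballI)
    show "pd vs g differentiable at x" if "x \<in> -{0}" for vs x
    proof (rule differentiable_cong_open[OF open_punctured that])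
      show "pd vs f differentiable at x"
        using decays_differentiable[OF f] that by simp
    qed (use pd_eq in simp)
    show "pd vs g \<in> O[at_infinity](\<lambda>x. norm x powr (- m - real (length vs)))" for vs
    proof -
      have "\<forall>\<^sub>F y in at_infinity. pd vs f y = pd vs g y"
        using eventually_nonzero_at_infinity by eventually_elim (rule pd_eq)
      from iffD1[OF landau_o.big.in_cong[OF this] decays_bigo[OF f, of vs]] show ?thesis .
    qed
  qed
qed

lemma decays_lincomb:
  assumes f: "decays m f" and g: "decays m g"
  shows "decays m (\<lambda>y. a * f y + g y)"
  unfolding decays_def
proof (intro conjI allI)
  show "smooth_on (-{0}) (\<lambda>y. a * f y + g y)"
    using smooth_on_lincomb[OF open_punctured decays_smooth_on[OF f] decays_smooth_on[OF g]] .
  fix vs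
  have ev: "\<forall>\<^sub>F y in at_infinity. a * pd vs f y + pd vs g y = pd vs (\<lambda>y. a * f y + g y) y"
    using eventually_nonzero_at_infinity
    by eventually_elim
      (simp add: pd_lincomb[OF open_punctured _ decays_smooth_on[OF f] decays_smooth_on[OF g]])
  have "(\<lambda>y. a * pd vs f y + pd vs g y) \<in> O[at_infinity](\<lambda>x. norm x powr (- m - real (length vs)))"
    using decays_bigo[OF f, of vs] decays_bigo[OF g, of vs] by (intro sum_in_bigo(1)) simp_all
  then show "pd vs (\<lambda>y. a * f y + g y) \<in> O[at_infinity](\<lambda>x. norm x powr (- m - real (length vs)))"
    by (rule iffD1[OF landau_o.big.in_cong[OF ev]])
qed

lemma decays_zero: "decays m (\<lambda>y. 0)"
  unfolding decays_def smooth_on_def by simp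

lemma decays_scale: "decays m f \<Longrightarrow> decays m (\<lambda>y. a * f y)"
  using decays_lincomb[OF _ decays_zero] by simp

lemma decays_sum:
  assumes "\<And>j. j \<in> S \<Longrightarrow> decays m (f j)"
  shows "decays m (\<lambda>y. \<Sum>j\<in>S. f j y)"
  using assms
proof (induction S rule: infinite_finite_induct)
  case (insert j S)
  then show ?case
    using decays_lincomb[of m "f j" "\<lambda>y. \<Sum>j\<in>S. f j y" 1] by simp
qed (simp_all add: decays_zero)

text \<open>Leibniz rule for a linear factor, whose second derivatives vanish.\<close>
lemma pd_linear_mult:
  fixes l :: "'a::real_normed_vector \<Rightarrow> real"
  assumes l: "bounded_linear l" and U: "open U" and f: "smooth_on U f"
  shows "x \<in> U \<Longrightarrow> pd vs (\<lambda>y. l y * f y) x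
    = l x * pd vs f x + (\<Sum>j<length vs. l (vs ! j) * pd (take j vs @ drop (Suc j) vs) f x)"
proof (induction vs arbitrary: x)
  case (Cons v vs)
  let ?R = "\<lambda>y. l y * pd vs f y + (\<Sum>j<length vs. l (vs ! j) * pd (take j vs @ drop (Suc j) vs) f y)"
  have dif: "pd ws f differentiable at x" for ws
    using f Cons.prems unfolding smooth_on_def by blast
  have "(?R has_derivative (\<lambda>h. (l x * dirD (pd vs f) h x + l h * pd vs f x) +
          (\<Sum>j<length vs. l (vs ! j) * dirD (pd (take j vs @ drop (Suc j) vs) f) h x))) (at x)"
    by (intro has_derivative_add has_derivative_mult has_derivative_sum has_derivative_mult_right
        bounded_linear.has_derivative[OF l] has_derivative_ident has_derivative_dirD dif)
  then have "dirD ?R v x = (l x * dirD (pd vs f) v x + l v * pd vs f x) +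
          (\<Sum>j<length vs. l (vs ! j) * dirD (pd (take j vs @ drop (Suc j) vs) f) v x)"
    by (rule dirD_eqI)
  moreover have "pd (v # vs) (\<lambda>y. l y * f y) x = dirD ?R v x"
    using dirD_cong_open[OF U Cons.prems Cons.IH] by simp
  moreover have "(\<Sum>j<length (v # vs). l ((v # vs) ! j) * pd (take j (v # vs) @ drop (Suc j) (v # vs)) f x)
     = l v * pd vs f x + (\<Sum>j<length vs. l (vs ! j) * dirD (pd (take j vs @ drop (Suc j) vs) f) v x)"
    by (simp only: length_Cons sum.lessThan_Suc_shift) simp
  ultimately show ?case
    by simp
qed simp

lemma smooth_on_linear_mult:
  fixes l :: "'a::real_normed_vector \<Rightarrow> real"
  assumes l: "bounded_linear l" and U: "open U" and f: "smooth_on U f"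
  shows "smooth_on U (\<lambda>y. l y * f y)"
  unfolding smooth_on_def
proof (intro allI ballI)
  fix vs x
  assume x: "x \<in> U"
  have "pd ws f differentiable at x" for ws
    using f x unfolding smooth_on_def by blast
  then have "(\<lambda>y. l y * pd vs f y + (\<Sum>j<length vs. l (vs ! j) * pd (take j vs @ drop (Suc j) vs) f y))
      differentiable at x"
    using bounded_linear_imp_differentiable[OF l]
    by (intro differentiable_add differentiable_mult differentiable_sum differentiable_const) auto
  then show "pd vs (\<lambda>y. l y * f y) differentiable at x"
    by (rule differentiable_cong_open[OF U x, rotated]) (simp add: pd_linear_mult[OF l U f])
qed

lemma decays_linear_mult:
  fixes l :: "'a::real_normed_vector \<Rightarrow> real"
  assumes l: "bounded_linear l" and f: "decays m f"
  shows "decays (m - 1) (\<lambda>y. l y * f y)"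
  unfolding decays_def
proof (intro conjI allI)
  show "smooth_on (- {0}) (\<lambda>y. l y * f y)"
    using smooth_on_linear_mult[OF l open_punctured decays_smooth_on[OF f]] .
  fix vs :: "'a list"
  let ?O = "O[at_infinity](\<lambda>x. norm x powr (- (m - 1) - real (length vs)))"
  have "(\<lambda>y. l y * pd vs f y) \<in> ?O"
    using bigo_norm_powr_linear_mult[OF l decays_bigo[OF f, of vs]] by (simp add: algebra_simps)
  moreover have "pd (take j vs @ drop (Suc j) vs) f \<in> ?O" if "j < length vs" for j
    using decays_bigo[OF f, of "take j vs @ drop (Suc j) vs"] that
    by (simp add: algebra_simps)
  ultimately have "(\<lambda>y. l y * pd vs f y
      + (\<Sum>j<length vs. l (vs ! j) * pd (take j vs @ drop (Suc j) vs) f y)) \<in> ?O"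
    by (intro sum_in_bigo(1) big_sum_in_bigo) simp_all
  moreover have ev: "\<forall>\<^sub>F y in at_infinity. l y * pd vs f y
      + (\<Sum>j<length vs. l (vs ! j) * pd (take j vs @ drop (Suc j) vs) f y) = pd vs (\<lambda>y. l y * f y) y"
    using eventually_nonzero_at_infinity
    by eventually_elim (simp add: pd_linear_mult[OF l open_punctured decays_smooth_on[OF f]])
  ultimately show "pd vs (\<lambda>y. l y * f y) \<in> ?O"
    using landau_o.big.in_cong[OF ev] by blast
qed

section \<open>Radial integrals\<close>

definition radial_integrand :: "real \<Rightarrow> ('a::real_normed_vector \<Rightarrow> real) \<Rightarrow> 'a \<Rightarrow> real \<Rightarrow> real" where
  "radial_integrand c h x s = (if s = 0 then 0 else s powr c * h ((1 / s) *\<^sub>R x))"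

text \<open>Substituting \<open>t = 1 / s\<close>, \<open>radial_integral c h x = \<integral>\<^sub>1\<^sup>\<infinity> t\<^sup>-\<^sup>c\<^sup>-\<^sup>2 h (t x) dt\<close>.\<close>
definition radial_integral :: "real \<Rightarrow> ('a::real_normed_vector \<Rightarrow> real) \<Rightarrow> 'a \<Rightarrow> real" where
  "radial_integral c h x = integral {0..1} (radial_integrand c h x)"

lemma radial_integral_eqI:
  assumes "\<And>r. r > 0 \<Longrightarrow> h (r *\<^sub>R y) = h (r *\<^sub>R x)"
  shows "radial_integral c h y = radial_integral c h x"
  unfolding radial_integral_def by (rule integral_cong) (use assms in \<open>simp add: radial_integrand_def\<close>)

lemma radial_integrand_bound:
  fixes k :: "'a::real_normed_vector \<Rightarrow> real"
  assumes k: "\<And>y. R \<le> norm y \<Longrightarrow> \<bar>k y\<bar> \<le> C * norm y powr (- q)" and C: "C \<ge> 0" and q: "q \<ge> 0"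
    and a: "0 < a" "a \<le> norm y" and t: "0 \<le> t" "t * R \<le> a"
  shows "\<bar>radial_integrand p k y t\<bar> \<le> C * a powr (- q) * t powr (p + q)"
proof (cases "t = 0")
  case False
  then have t0: "t > 0"
    using t by simp
  have "R \<le> a / t"
    using t t0 by (simp add: field_simps)
  also have "\<dots> \<le> norm ((1 / t) *\<^sub>R y)"
    using a t0 by (simp add: divide_right_mono)
  finally have "\<bar>k ((1 / t) *\<^sub>R y)\<bar> \<le> C * norm ((1 / t) *\<^sub>R y) powr (- q)"
    by (rule k)
  also have "norm ((1 / t) *\<^sub>R y) = norm y / t"
    using t0 by simp
  also have "(norm y / t) powr (- q) = norm y powr (- q) * t powr q"
    using t0 a by (simp add: powr_divide powr_minus_divide)
  also have "C * (norm y powr (- q) * t powr q) \<le> C * (a powr (- q) * t powr q)"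
    using C a q by (intro mult_left_mono mult_right_mono powr_mono2') auto
  finally have "t powr p * \<bar>k ((1 / t) *\<^sub>R y)\<bar> \<le> t powr p * (C * (a powr (- q) * t powr q))"
    by (simp add: mult_left_mono)
  also have "\<dots> = C * a powr (- q) * t powr (p + q)"
    using t0 by (simp add: powr_add mult_ac)
  finally show ?thesis
    using t0 by (simp add: radial_integrand_def abs_mult)
qed (simp add: radial_integrand_def)

lemma radial_integrand_tendsto_0:
  fixes k :: "'a::real_normed_vector \<Rightarrow> real"
  assumes k: "k \<in> O[at_infinity](\<lambda>x. norm x powr (- q))" and q: "q > 0" and pq: "p + q > 0"
    and x: "x \<noteq> 0"
  shows "((\<lambda>z. radial_integrand p k (fst z) (snd z)) \<longlongrightarrow> 0) (at (x, 0) within (-{0}) \<times> {0..})"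
proof -
  obtain C R where CR: "C \<ge> 0" "R > 0" "\<And>y. R \<le> norm y \<Longrightarrow> \<bar>k y\<bar> \<le> C * norm y powr (- q)"
    using bigo_norm_powrE[OF k] by blast
  define a where "a = norm x / 2"
  have a: "a > 0"
    using x unfolding a_def by simp
  have "\<forall>\<^sub>F z in at (x, 0) within (-{0}) \<times> {0..}.
      norm (radial_integrand p k (fst z) (snd z)) \<le> C * a powr (- q) * \<bar>snd z\<bar> powr (p + q)"
    unfolding eventually_at
  proof (intro exI[of _ "min a (a / R)"] conjI ballI impI)
    fix z :: "'a \<times> real"
    assume z: "z \<in> (-{0}) \<times> {0..}" "z \<noteq> (x, 0) \<and> dist z (x, 0) < min a (a / R)"
    have "dist (fst z) x < a" "snd z < a / R"
      using dist_fst_le[of z "(x, 0)"] dist_snd_le[of z "(x, 0)"] z by (auto simp: dist_real_def)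
    moreover have "norm x \<le> norm (fst z) + dist (fst z) x"
      by (metis dist_commute dist_norm norm_triangle_sub)
    ultimately have "a \<le> norm (fst z)" "snd z * R \<le> a"
      using CR(2) unfolding a_def by (simp_all add: field_simps)
    moreover have "snd z \<ge> 0"
      using z(1) by auto
    ultimately show "norm (radial_integrand p k (fst z) (snd z)) \<le> C * a powr (- q) * \<bar>snd z\<bar> powr (p + q)"
      using radial_integrand_bound[where k = k, OF CR(3,1)] a q by simp
  qed (use a CR(2) in simp)
  moreover have "((\<lambda>z. C * a powr (- q) * \<bar>snd z\<bar> powr (p + q)) \<longlongrightarrow> 0) (at (x, 0) within (-{0}) \<times> {0..})"
  proof -
    have "((\<lambda>z. \<bar>snd z\<bar> powr (p + q)) \<longlongrightarrow> \<bar>snd (x, 0 :: real)\<bar> powr (p + q)) (at (x, 0) within (-{0}) \<times> {0..})"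
      using pq by (intro tendsto_intros) auto
    then show ?thesis
      using tendsto_mult_left[of _ 0 _ "C * a powr (- q)"] pq by simp
  qed
  ultimately show ?thesis
    by (rule Lim_null_comparison)
qed

lemma continuous_on_radial_integrand:
  fixes k :: "'a::real_normed_vector \<Rightarrow> real"
  assumes k: "continuous_on (-{0}) k" "k \<in> O[at_infinity](\<lambda>x. norm x powr (- q))"
    and q: "q > 0" and pq: "p + q > 0"
  shows "continuous_on ((-{0}) \<times> {0..}) (\<lambda>z. radial_integrand p k (fst z) (snd z))"
  unfolding continuous_on_eq_continuous_within
proof
  fix z :: "'a \<times> real"
  assume z: "z \<in> (-{0}) \<times> {0..}"
  show "continuous (at z within (-{0}) \<times> {0..}) (\<lambda>z. radial_integrand p k (fst z) (snd z))"
  proof (cases "snd z = 0")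
    case True
    then have "z = (fst z, 0)" and "fst z \<noteq> 0"
      using z by (auto simp: prod_eq_iff)
    then show ?thesis
      using radial_integrand_tendsto_0[OF k(2) q pq \<open>fst z \<noteq> 0\<close>]
      unfolding continuous_within using True by (simp add: radial_integrand_def)
  next
    case False
    then have s: "snd z > 0"
      using z by auto
    have "(1 / snd z) *\<^sub>R fst z \<in> -{0}"
      using z s by auto
    then have "isCont k ((1 / snd z) *\<^sub>R fst z)"
      using k(1) by (simp add: continuous_on_eq_continuous_at[OF open_punctured])
    moreover have "isCont (\<lambda>z. (1 / snd z) *\<^sub>R fst z) z"
      using s by (intro continuous_intros) auto
    ultimately have "isCont (\<lambda>z. k ((1 / snd z) *\<^sub>R fst z)) z"
      using continuous_at_compose[of z "\<lambda>z. (1 / snd z) *\<^sub>R fst z" k] by (simp add: o_def)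
    moreover have "isCont (\<lambda>z. snd z powr p) z"
      using s by (intro continuous_intros) auto
    ultimately have "isCont (\<lambda>z. snd z powr p * k ((1 / snd z) *\<^sub>R fst z)) z"
      by (intro continuous_mult)
    then show ?thesis
    proof (rule continuous_transform_within[OF continuous_at_imp_continuous_at_within s z])
      fix z'
      assume "dist z' z < snd z"
      then have "snd z' \<noteq> 0"
        using dist_snd_le[of z' z] by (auto simp: dist_real_def)
      then show "snd z' powr p * k ((1 / snd z') *\<^sub>R fst z') = radial_integrand p k (fst z') (snd z')"
        by (simp add: radial_integrand_def)
    qed
  qed
qed

lemma decays_continuous_on_radial_integrand:
  assumes h: "decays m h" and m: "m > 0" and cm: "c + m > 0"
  shows "continuous_on ((-{0}) \<times> {0..}) (\<lambda>z. radial_integrand c h (fst z) (snd z))"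
  by (rule continuous_on_radial_integrand[OF decays_continuous_on[OF h, of "[]", simplified]])
    (use decays_bigo[OF h, of "[]"] m cm in simp_all)

lemma decays_continuous_on_radial_integrand_slice:
  assumes h: "decays m h" and m: "m > 0" and cm: "c + m > 0" and x: "x \<noteq> 0"
  shows "continuous_on {0..} (radial_integrand c h x)"
proof -
  have "continuous_on {0..} (\<lambda>s. (\<lambda>z. radial_integrand c h (fst z) (snd z)) (x, s))"
    by (rule continuous_on_compose2[OF decays_continuous_on_radial_integrand[OF h m cm]])
      (use x in \<open>auto intro!: continuous_on_Pair continuous_on_const continuous_on_id\<close>)
  then show ?thesis
    by simp
qed

lemma decays_radial_integrand_integrable:
  assumes h: "decays m h" and m: "m > 0" and cm: "c + m > 0" and x: "x \<noteq> 0"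
  shows "radial_integrand c h x integrable_on {0..1}"
proof (rule integrable_continuous_interval)
  from decays_continuous_on_radial_integrand_slice[OF h m cm x]
  show "continuous_on {0..1} (radial_integrand c h x)"
    by (rule continuous_on_subset) auto
qed

lemma has_derivative_radial_integrand:
  assumes h: "decays m h" and x: "x \<noteq> 0" and s: "s \<ge> 0"
  shows "((\<lambda>x. radial_integrand c h x s) has_derivative
           (\<lambda>w. radial_integrand (c - 1) (pd [w] h) x s)) (at x)"
proof (cases "s = 0")
  case False
  then have s0: "s > 0"
    using s by simp
  have dh: "h differentiable at ((1 / s) *\<^sub>R x)"
    using decays_differentiable[OF h, of _ "[]"] x s0 by simp
  have "((\<lambda>x. (1 / s) *\<^sub>R x) has_derivative (\<lambda>w. (1 / s) *\<^sub>R w)) (at x)"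
    by (intro derivative_eq_intros) auto
  from has_derivative_compose[OF this has_derivative_dirD[OF dh]]
  have "((\<lambda>x. s powr c * h ((1 / s) *\<^sub>R x)) has_derivative
           (\<lambda>w. s powr c * dirD h ((1 / s) *\<^sub>R w) ((1 / s) *\<^sub>R x))) (at x)"
    by (rule has_derivative_mult_right)
  moreover have "s powr c * dirD h ((1 / s) *\<^sub>R w) ((1 / s) *\<^sub>R x)
      = radial_integrand (c - 1) (pd [w] h) x s" for w
    using linear_scale[OF linear_dirD[OF dh], of "1 / s" w] s0
    by (simp add: radial_integrand_def powr_diff)
  ultimately show ?thesis
    using False by (simp add: radial_integrand_def)
qed (simp add: radial_integrand_def)

lemma bounded_linear_radial_integrand_pd:
  "decays m h \<Longrightarrow> x \<noteq> 0 \<Longrightarrow> s \<ge> 0 \<Longrightarrow>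
    bounded_linear (\<lambda>w. radial_integrand (c - 1) (pd [w] h) x s)"
  using has_derivative_bounded_linear[OF has_derivative_radial_integrand] by blast

lemma continuous_on_radial_integrand_derivative:
  fixes h :: "'a::euclidean_space \<Rightarrow> real"
  assumes h: "decays m h" and m: "m > 0" and cm: "c + m > 0" and S: "0 \<notin> S"
  shows "continuous_on (S \<times> cbox 0 1) (\<lambda>(x, s). Blinfun (\<lambda>w. radial_integrand (c - 1) (pd [w] h) x s))"
proof (rule continuous_on_blinfun_componentwise)
  fix i :: 'a
  have "continuous_on ((-{0}) \<times> {0..}) (\<lambda>z. radial_integrand (c - 1) (pd [i] h) (fst z) (snd z))"
    by (rule decays_continuous_on_radial_integrand[OF decays_pd[OF h, of "[i]"]]) (use m cm in simp_all)
  then have "continuous_on (S \<times> cbox 0 1) (\<lambda>z. radial_integrand (c - 1) (pd [i] h) (fst z) (snd z))"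
    by (rule continuous_on_subset) (use S in auto)
  then show "continuous_on (S \<times> cbox 0 1)
      (\<lambda>z. blinfun_apply ((\<lambda>(x, s). Blinfun (\<lambda>w. radial_integrand (c - 1) (pd [w] h) x s)) z) i)"
  proof (rule continuous_on_eq)
    fix z :: "'a \<times> real"
    assume "z \<in> S \<times> cbox 0 1"
    then have "fst z \<noteq> 0" "snd z \<ge> 0"
      using S by auto
    from bounded_linear_Blinfun_apply[OF bounded_linear_radial_integrand_pd[OF h this]]
    show "radial_integrand (c - 1) (pd [i] h) (fst z) (snd z)
        = blinfun_apply ((\<lambda>(x, s). Blinfun (\<lambda>w. radial_integrand (c - 1) (pd [w] h) x s)) z) i"
      by (simp add: split_beta)
  qed
qed

lemma has_derivative_radial_integral:
  fixes h :: "'a::euclidean_space \<Rightarrow> real"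
  assumes h: "decays m h" and m: "m > 0" and cm: "c + m > 0" and x0: "x0 \<noteq> 0"
  shows "(radial_integral c h has_derivative (\<lambda>w. radial_integral (c - 1) (pd [w] h) x0)) (at x0)"
proof -
  define U where "U = ball x0 (norm x0 / 2)"
  have U: "open U" "convex U" "x0 \<in> U" "0 \<notin> U"
    using x0 unfolding U_def by auto
  define fx where "fx x s = Blinfun (\<lambda>w. radial_integrand (c - 1) (pd [w] h) x s)" for x s
  have fx: "blinfun_apply (fx x s) = (\<lambda>w. radial_integrand (c - 1) (pd [w] h) x s)"
    if "x \<noteq> 0" "s \<ge> 0" for x s
    unfolding fx_def using bounded_linear_radial_integrand_pd[OF h that]
    by (rule bounded_linear_Blinfun_apply)
  have cont: "continuous_on (U \<times> cbox 0 1) (\<lambda>(x, s). fx x s)"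
    unfolding fx_def by (rule continuous_on_radial_integrand_derivative[OF h m cm U(4)])
  have "((\<lambda>x. radial_integrand c h x s) has_derivative blinfun_apply (fx x s)) (at x within U)"
    if "x \<in> U" "s \<in> cbox 0 1" for x s
    using has_derivative_radial_integrand[OF h] fx U(4) that
    by (metis has_derivative_at_withinI atLeastAtMost_iff cbox_interval)
  moreover have "radial_integrand c h x integrable_on cbox 0 1" if "x \<in> U" for x
    using decays_radial_integrand_integrable[OF h m cm] U(4) that by (metis cbox_interval)
  ultimately have D: "(radial_integral c h has_derivative blinfun_apply (integral (cbox 0 1) (fx x0)))
      (at x0 within U)"
    using leibniz_rule[OF _ _ cont U(3,2)] unfolding radial_integral_def by (simp add: cbox_interval)
  have "continuous_on (cbox 0 1) (\<lambda>s. (\<lambda>(x, s). fx x s) (x0, s))"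
    by (rule continuous_on_compose2[OF cont])
      (use U(3) in \<open>auto intro!: continuous_on_Pair continuous_on_const continuous_on_id\<close>)
  then have int: "fx x0 integrable_on cbox 0 1"
    by (intro integrable_continuous) simp
  have "blinfun_apply (integral (cbox 0 1) (fx x0)) = (\<lambda>w. radial_integral (c - 1) (pd [w] h) x0)"
  proof (rule ext)
    fix w
    have "blinfun_apply (integral (cbox 0 1) (fx x0)) w = integral (cbox 0 1) (\<lambda>s. blinfun_apply (fx x0 s) w)"
      by (rule blinfun_apply_integral[OF int])
    also have "\<dots> = radial_integral (c - 1) (pd [w] h) x0"
      unfolding radial_integral_def cbox_interval by (rule integral_cong) (simp add: fx[OF x0])
    finally show "blinfun_apply (integral (cbox 0 1) (fx x0)) w = radial_integral (c - 1) (pd [w] h) x0" .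
  qed
  with D show ?thesis
    using at_within_open[OF U(3,1)] by simp
qed

lemma pd_radial_integral:
  fixes h :: "'a::euclidean_space \<Rightarrow> real"
  assumes h: "decays m h" and m: "m > 0" and cm: "c + m > 0"
  shows "x \<noteq> 0 \<Longrightarrow> pd vs (radial_integral c h) x = radial_integral (c - real (length vs)) (pd vs h) x"
proof (induction vs arbitrary: x)
  case (Cons v vs)
  let ?k = "real (length vs)"
  have "(radial_integral (c - ?k) (pd vs h) has_derivative
      (\<lambda>w. radial_integral (c - ?k - 1) (pd [w] (pd vs h)) x)) (at x)"
    using has_derivative_radial_integral[OF decays_pd[OF h] _ _ Cons.prems] m cm by simp
  then have "dirD (radial_integral (c - ?k) (pd vs h)) v x = radial_integral (c - ?k - 1) (pd (v # vs) h) x"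
    by (simp add: dirD_eqI)
  moreover have "pd (v # vs) (radial_integral c h) x = dirD (radial_integral (c - ?k) (pd vs h)) v x"
    using dirD_cong_open[OF open_punctured, of x "pd vs (radial_integral c h)"
        "radial_integral (c - ?k) (pd vs h)" v] Cons by simp
  ultimately show ?case
    by (simp add: algebra_simps)
qed simp

lemma radial_integral_bigo:
  assumes h: "decays m h" and m: "m > 0" and cm: "c + m > 0"
  shows "radial_integral c h \<in> O[at_infinity](\<lambda>x. norm x powr (- m))"
proof -
  obtain C R where CR: "C \<ge> 0" "R > 0" "\<And>y. R \<le> norm y \<Longrightarrow> \<bar>h y\<bar> \<le> C * norm y powr (- m)"
    using bigo_norm_powrE[OF decays_bigo[OF h, of "[]"]] by auto
  show ?thesis
  proof (rule bigo_norm_powrI)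
    fix y :: 'a
    assume y: "R \<le> norm y"
    then have y0: "y \<noteq> 0"
      using CR(2) by auto
    have bound: "norm (radial_integrand c h y s) \<le> C * norm y powr (- m)" if "s \<in> cbox 0 1" for s
    proof -
      have "s * R \<le> R"
        using that CR(2) by (simp add: mult_left_le_one_le)
      then have "s * R \<le> norm y"
        using y by linarith
      then have "\<bar>radial_integrand c h y s\<bar> \<le> C * norm y powr (- m) * s powr (c + m)"
        using radial_integrand_bound[where k = h and R = R and C = C and q = m and a = "norm y"
            and y = y and t = s and p = c, OF CR(3,1)] y0 m that
        by simp
      also have "\<dots> \<le> C * norm y powr (- m)"
        using that cm CR(1) by (intro mult_left_le powr_le1) auto
      finally show ?thesis
        by simp
    qed
    have "(radial_integrand c h y has_integral radial_integral c h y) (cbox 0 1)"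
      using decays_radial_integrand_integrable[OF h m cm y0]
      unfolding radial_integral_def cbox_interval by (rule integrable_integral)
    from has_integral_bound[OF _ this bound] CR(1)
    show "\<bar>radial_integral c h y\<bar> \<le> C * norm y powr (- m)"
      by simp
  qed
qed

lemma decays_radial_integral:
  fixes h :: "'a::euclidean_space \<Rightarrow> real"
  assumes h: "decays m h" and m: "m > 0" and cm: "c + m > 0"
  shows "decays m (radial_integral c h)"
  unfolding decays_def smooth_on_def
proof (intro conjI allI ballI)
  fix vs :: "'a list"
  let ?k = "real (length vs)"
  have hk: "decays (m + ?k) (pd vs h)" "m + ?k > 0" "(c - ?k) + (m + ?k) > 0"
    using decays_pd[OF h] m cm by auto
  have eq: "radial_integral (c - ?k) (pd vs h) y = pd vs (radial_integral c h) y" if "y \<in> -{0}" for y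
    using pd_radial_integral[OF h m cm] that by simp
  show "pd vs (radial_integral c h) differentiable at x" if "x \<in> -{0}" for x
  proof (rule differentiable_cong_open[OF open_punctured that eq])
    show "radial_integral (c - ?k) (pd vs h) differentiable at x"
      using has_derivative_radial_integral[OF hk, of x] that by (auto intro: differentiableI)
  qed
  have "\<forall>\<^sub>F y in at_infinity. radial_integral (c - ?k) (pd vs h) y = pd vs (radial_integral c h) y"
    using eventually_nonzero_at_infinity by eventually_elim (simp add: eq)
  from iffD1[OF landau_o.big.in_cong[OF this] radial_integral_bigo[OF hk]]
  show "pd vs (radial_integral c h) \<in> O[at_infinity](\<lambda>x. norm x powr (- m - ?k))"
    by (simp add: algebra_simps)
qed

lemma has_real_derivative_rescaled:
  assumes W: "W differentiable at ((1 / s) *\<^sub>R x)" and s: "s > 0"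
  shows "((\<lambda>s. s powr (- k) * W ((1 / s) *\<^sub>R x)) has_real_derivative
     - (s powr (- k - 1) * (k * W ((1 / s) *\<^sub>R x) + dirD W ((1 / s) *\<^sub>R x) ((1 / s) *\<^sub>R x)))) (at s)"
proof -
  define y where "y = (1 / s) *\<^sub>R x"
  have "((\<lambda>s. (1 / s) *\<^sub>R x) has_derivative (\<lambda>h. (h * - (1 / s ^ 2)) *\<^sub>R x)) (at s)"
    using s by (auto intro!: derivative_eq_intros simp: power2_eq_square)
  from has_derivative_compose[OF this has_derivative_dirD[OF W]]
  have "((\<lambda>s. W ((1 / s) *\<^sub>R x)) has_derivative (\<lambda>h. dirD W ((h * - (1 / s ^ 2)) *\<^sub>R x) y)) (at s)"
    unfolding y_def .
  moreover have "(\<lambda>h. dirD W ((h * - (1 / s ^ 2)) *\<^sub>R x) y) = (*) (- (1 / s) * dirD W y y)"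
  proof (rule ext)
    fix h
    have "(h * - (1 / s ^ 2)) *\<^sub>R x = (- (h / s)) *\<^sub>R y"
      using s unfolding y_def by (simp add: power2_eq_square)
    then show "dirD W ((h * - (1 / s ^ 2)) *\<^sub>R x) y = - (1 / s) * dirD W y y * h"
      using linear_scale[OF linear_dirD[OF W[folded y_def]], of "- (h / s)" y] by simp
  qed
  ultimately have "((\<lambda>s. W ((1 / s) *\<^sub>R x)) has_real_derivative - (1 / s) * dirD W y y) (at s)"
    unfolding has_field_derivative_def by simp
  from DERIV_mult[OF has_real_derivative_powr[OF s, of "- k"] this]
  have "((\<lambda>s. s powr (- k) * W ((1 / s) *\<^sub>R x)) has_real_derivative
      - k * s powr (- k - 1) * W y + - (1 / s) * dirD W y y * s powr (- k)) (at s)"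
    unfolding y_def .
  moreover have "- k * s powr (- k - 1) * W y + - (1 / s) * dirD W y y * s powr (- k)
      = - (s powr (- k - 1) * (k * W y + dirD W y y))"
    using s by (simp add: powr_diff algebra_simps)
  ultimately show ?thesis
    unfolding y_def by simp
qed

lemma radial_integral_euler:
  assumes W: "decays q W" and k: "0 \<le> k" "k < q" and x: "x \<noteq> 0"
  shows "radial_integral (- k - 1) (\<lambda>y. k * W y + dirD W y y) x = - W x"
proof -
  let ?F = "radial_integrand (- k) W x"
  let ?G = "radial_integrand (- k - 1) (\<lambda>y. k * W y + dirD W y y) x"
  have "continuous_on {0..} ?F"
    by (rule decays_continuous_on_radial_integrand_slice[OF W _ _ x]) (use k in simp_all)
  then have "continuous_on {0..1} ?F"
    by (rule continuous_on_subset) auto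
  moreover have "(?F has_vector_derivative - ?G s) (at s)" if "s \<in> {0<..<1}" for s
  proof -
    have s: "s > 0"
      using that by simp
    have "W differentiable at ((1 / s) *\<^sub>R x)"
      using decays_differentiable[OF W, of _ "[]"] x s by simp
    from has_real_derivative_rescaled[OF this s, where k = k]
    have "(?F has_real_derivative - (s powr (- k - 1) *
        (k * W ((1 / s) *\<^sub>R x) + dirD W ((1 / s) *\<^sub>R x) ((1 / s) *\<^sub>R x)))) (at s)"
      by (rule has_field_derivative_transform_within_open[where S = "{0<..}"])
        (use s in \<open>auto simp: radial_integrand_def\<close>)
    then have "(?F has_real_derivative - ?G s) (at s)"
      using s by (simp add: radial_integrand_def)
    then show ?thesis
      by (simp add: has_real_derivative_iff_has_vector_derivative)
  qed
  ultimately have "((\<lambda>s. - ?G s) has_integral ?F 1 - ?F 0) {0..1}"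
    by (intro fundamental_theorem_of_calculus_interior) auto
  then have "(?G has_integral - W x) {0..1}"
    by (simp add: has_integral_neg_iff radial_integrand_def[abs_def])
  then show ?thesis
    unfolding radial_integral_def by (rule integral_unique)
qed

section \<open>The complex structure of \<open>\<complex>\<^sup>2\<close>\<close>

lemma bounded_linear_vec_smult: "bounded_linear (\<lambda>z::complex^'n. c *s z)"
proof -
  have "linear (\<lambda>z::complex^'n. c *s z)"
    by (rule linearI) (simp_all add: vec_eq_iff scaleR_conv_of_real[where 'a = complex] algebra_simps)
  then show ?thesis
    by (simp add: linear_conv_bounded_linear)
qed

lemma bounded_linear_vec_smult_left: "bounded_linear (\<lambda>c::complex. c *s (z::complex^'n))"
proof -
  have "linear (\<lambda>c::complex. c *s z)"
    by (rule linearI) (simp_all add: vec_eq_iff scaleR_conv_of_real[where 'a = complex] algebra_simps)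
  then show ?thesis
    by (simp add: linear_conv_bounded_linear)
qed

lemma matrix_vector_mult_vec_smult: "(A::complex^'n^'m) *v (c *s z) = c *s (A *v z)"
  by (simp add: vec_eq_iff matrix_vector_mult_def sum_distrib_left mult_ac)

lemma matrix_vector_mult_scaleR_complex: "(A::complex^'n^'m) *v (r *\<^sub>R z) = r *\<^sub>R (A *v z)"
  by (simp add: vec_eq_iff matrix_vector_mult_def scaleR_conv_of_real[where 'a = complex] sum_distrib_left mult_ac)

lemma vec_smult_scaleR: "(c::complex) *s (r *\<^sub>R (z::complex^'n)) = r *\<^sub>R (c *s z)"
  by (simp add: vec_eq_iff scaleR_conv_of_real[where 'a = complex] mult_ac)

lemma scaleR_vec_smult: "(r *\<^sub>R (c::complex)) *s (z::complex^'n) = r *\<^sub>R (c *s z)"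
  by (simp add: vec_eq_iff scaleR_conv_of_real[where 'a = complex] mult_ac)

lemma dirD_dbar:
  assumes "\<And>vs. pd vs \<psi> differentiable at x"
  shows "dirD (\<lambda>y. dbar \<psi> y w) h x
    = (complex_of_real (pd [h, w] \<psi> x) + \<i> * complex_of_real (pd [h, \<i> *s w] \<psi> x)) / 2"
proof -
  have "((\<lambda>y. complex_of_real (dirD \<psi> w y) + \<i> * complex_of_real (dirD \<psi> (\<i> *s w) y))
      has_derivative
      (\<lambda>h. complex_of_real (pd [h, w] \<psi> x) + \<i> * complex_of_real (pd [h, \<i> *s w] \<psi> x))) (at x)"
    using has_derivative_dirD[OF assms[of "[w]"]] has_derivative_dirD[OF assms[of "[\<i> *s w]"]]
    by (intro has_derivative_add has_derivative_mult_right has_derivative_of_real) auto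
  from bounded_linear.has_derivative[OF bounded_linear_divide[of "2::complex"] this]
  show ?thesis
    unfolding dbar_def Jmul_def by (rule dirD_eqI)
qed

lemma i_ddbar_eq_pd:
  assumes \<psi>: "smooth_on (-{0}) \<psi>" and x: "x \<noteq> 0"
  shows "i_ddbar \<psi> x u v = complex_of_real ((pd [v, \<i> *s u] \<psi> x - pd [u, \<i> *s v] \<psi> x) / 2)"
proof -
  have "pd vs \<psi> differentiable at x" for vs
    using \<psi> x unfolding smooth_on_def by simp
  moreover have "pd [v, u] \<psi> x = pd [u, v] \<psi> x"
    using pd_commute[OF open_punctured _ \<psi>] x by simp
  ultimately show ?thesis
    unfolding i_ddbar_def extd_def by (simp add: dirD_dbar complex_eq_iff field_simps)
qed

section \<open>Circle-invariant forms of type (1,1)\<close>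

locale circle_invariant_form =
  fixes \<gamma> :: "complex^2 \<Rightarrow> complex^2 \<Rightarrow> real" and m :: real
  assumes linear_form: "\<And>x. x \<noteq> 0 \<Longrightarrow> linear (\<gamma> x)"
    and decays_form: "\<And>w. decays m (\<lambda>y. \<gamma> y w)"
    and decay_rate: "m > 2"
    and circle_invariant: "\<And>c x v. cmod c = 1 \<Longrightarrow> x \<noteq> 0 \<Longrightarrow> \<gamma> (c *s x) (c *s v) = \<gamma> x v"
    and type_11: "\<And>x u v. x \<noteq> 0 \<Longrightarrow> extd \<gamma> x (Jmul u) (Jmul v) = extd \<gamma> x u v"
begin

lemma differentiable_form: "x \<noteq> 0 \<Longrightarrow> pd vs (\<lambda>y. \<gamma> y w) differentiable at x"
  using decays_differentiable[OF decays_form] .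

lemma differentiable_form_apply: "x \<noteq> 0 \<Longrightarrow> (\<lambda>y. \<gamma> y w) differentiable at x"
  using differentiable_form[of x "[]"] by simp

definition hamiltonian :: "complex^2 \<Rightarrow> real" where
  "hamiltonian z = \<gamma> z (\<i> *s z)"

lemma decays_hamiltonian: "decays (m - 1) hamiltonian"
proof -
  have "bounded_linear (\<lambda>z::complex^2. (\<i> *s z) \<bullet> b)" for b
    using bounded_linear_compose[OF bounded_linear_inner_left[of b] bounded_linear_vec_smult[of \<i>]]
    by simp
  then have "decays (m - 1) (\<lambda>z. \<Sum>b\<in>Basis. ((\<i> *s z) \<bullet> b) * \<gamma> z b)"
    by (intro decays_sum decays_linear_mult decays_form)
  then show ?thesis
    by (rule decays_cong) (simp add: hamiltonian_def linear_eq_sum_Basis[OF linear_form, symmetric])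
qed

lemma infinitesimal_circle_invariance:
  assumes z: "z \<noteq> 0"
  shows "dirD (\<lambda>y. \<gamma> y w) (\<i> *s z) z + \<gamma> z (\<i> *s w) = 0"
proof -
  have "(cis has_derivative (\<lambda>t. t *\<^sub>R (\<i> * cis 0))) (at 0)"
    using has_derivative_cis[OF has_derivative_ident, of 0 UNIV] by simp
  from bounded_linear.has_derivative[OF bounded_linear_vec_smult_left this]
  have "((\<lambda>t. cis t *s v) has_derivative (\<lambda>h. h *\<^sub>R (\<i> *s v))) (at 0)" for v :: "complex^2"
    by (simp add: scaleR_vec_smult)
  note dcis = this
  have "((\<lambda>t. \<gamma> (cis t *s z) (cis t *s w)) has_derivative
      (\<lambda>h. dirD (\<lambda>y. \<gamma> y (cis 0 *s w)) (h *\<^sub>R (\<i> *s z)) (cis 0 *s z)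
        + \<gamma> (cis 0 *s z) (h *\<^sub>R (\<i> *s w)))) (at 0)"
  proof (rule has_derivative_linear_family[OF open_punctured _ _ _ dcis dcis])
    show "cis 0 *s z \<in> -{0}"
      using z by simp
    show "linear (\<gamma> y)" if "y \<in> -{0}" for y
      using linear_form that by simp
    show "(\<lambda>y. \<gamma> y v) differentiable at (cis 0 *s z)" for v
      using differentiable_form_apply[OF z] by simp
  qed
  then have D: "((\<lambda>t. \<gamma> (cis t *s z) (cis t *s w)) has_derivative
      (\<lambda>h. dirD (\<lambda>y. \<gamma> y w) (h *\<^sub>R (\<i> *s z)) z + \<gamma> z (h *\<^sub>R (\<i> *s w)))) (at 0)"
    by simp
  have "(\<lambda>t. \<gamma> (cis t *s z) (cis t *s w)) = (\<lambda>t. \<gamma> z w)"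
    using circle_invariant z by simp
  then have "((\<lambda>t. \<gamma> (cis t *s z) (cis t *s w)) has_derivative (\<lambda>h. 0)) (at 0)"
    by simp
  from has_derivative_unique[OF D this]
  have "(\<lambda>h. dirD (\<lambda>y. \<gamma> y w) (h *\<^sub>R (\<i> *s z)) z + \<gamma> z (h *\<^sub>R (\<i> *s w))) = (\<lambda>h. 0)" .
  from fun_cong[OF this, of 1] show ?thesis
    by simp
qed

lemma dirD_hamiltonian:
  assumes z: "z \<noteq> 0"
  shows "dirD hamiltonian w z = dirD (\<lambda>y. \<gamma> y (\<i> *s z)) w z + \<gamma> z (\<i> *s w)"
proof -
  have "((\<lambda>t. \<gamma> t (\<i> *s t)) has_derivative (\<lambda>h. dirD (\<lambda>y. \<gamma> y (\<i> *s z)) h z + \<gamma> z (\<i> *s h))) (at z)"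
  proof (rule has_derivative_linear_family[OF open_punctured, where p = "\<lambda>t. t", simplified])
    show "z \<noteq> 0" "\<And>y. y \<noteq> 0 \<Longrightarrow> linear (\<gamma> y)" "\<And>v. (\<lambda>y. \<gamma> y v) differentiable at z"
      using z linear_form differentiable_form_apply[OF z] by simp_all
    show "((\<lambda>t. \<i> *s t) has_derivative (\<lambda>h. \<i> *s h)) (at z)"
      by (rule bounded_linear.has_derivative[OF bounded_linear_vec_smult has_derivative_ident])
  qed (rule has_derivative_ident)
  then show ?thesis
    unfolding hamiltonian_def by (rule dirD_eqI)
qed

text \<open>Cartan's formula: invariance of \<open>\<gamma>\<close> gives \<open>\<iota>\<^sub>\<xi> d\<gamma> = - d hamiltonian\<close> for the
  generator \<open>\<xi> z = \<i> z\<close> of the circle action, and the (1,1) condition trades \<open>\<xi>\<close> for the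
  radial field \<open>z\<close>.\<close>
lemma extd_radial:
  assumes z: "z \<noteq> 0"
  shows "extd \<gamma> z z w = - pd [\<i> *s w] hamiltonian z"
proof -
  have "extd \<gamma> z z w = dirD (\<lambda>y. \<gamma> y (\<i> *s w)) (\<i> *s z) z - dirD (\<lambda>y. \<gamma> y (\<i> *s z)) (\<i> *s w) z"
    using type_11[OF z, of z w] unfolding extd_def Jmul_def by simp
  moreover have "dirD (\<lambda>y. \<gamma> y (\<i> *s w)) (\<i> *s z) z = \<gamma> z w"
    using infinitesimal_circle_invariance[OF z, of "\<i> *s w"] linear_neg[OF linear_form[OF z], of w]
    by simp
  moreover have "pd [\<i> *s w] hamiltonian z = dirD (\<lambda>y. \<gamma> y (\<i> *s z)) (\<i> *s w) z - \<gamma> z w"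
    using dirD_hamiltonian[OF z, of "\<i> *s w"] linear_neg[OF linear_form[OF z], of w]
    by simp
  ultimately show ?thesis
    by simp
qed

lemma has_derivative_extd_radial:
  assumes y: "y \<noteq> 0"
  shows "((\<lambda>z. extd \<gamma> z z v) has_derivative
    (\<lambda>h. (pd [h, y] (\<lambda>x. \<gamma> x v) y + pd [h] (\<lambda>x. \<gamma> x v) y) -
         (pd [h, v] (\<lambda>x. \<gamma> x y) y + pd [v] (\<lambda>x. \<gamma> x h) y))) (at y)"
proof -
  have "((\<lambda>z. dirD (\<lambda>x. \<gamma> x v) z z) has_derivative
     (\<lambda>h. dirD (\<lambda>z. dirD (\<lambda>x. \<gamma> x v) y z) h y + dirD (\<lambda>x. \<gamma> x v) h y)) (at y)"
  proof (rule has_derivative_linear_family[OF open_punctured, where p = "\<lambda>t. t" and q = "\<lambda>t. t"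
        and F = "\<lambda>z w. dirD (\<lambda>x. \<gamma> x v) w z", simplified])
    show "y \<noteq> 0"
      by (rule y)
    show "linear (\<lambda>w. dirD (\<lambda>x. \<gamma> x v) w z)" if "z \<noteq> 0" for z
      using linear_dirD[OF differentiable_form_apply[OF that]] by simp
    show "(\<lambda>z. dirD (\<lambda>x. \<gamma> x v) w z) differentiable at y" for w
      using differentiable_form[OF y, of "[w]"] by simp
  qed (rule has_derivative_ident)+
  moreover have "((\<lambda>z. dirD (\<lambda>x. \<gamma> x z) v z) has_derivative
     (\<lambda>h. dirD (\<lambda>z. dirD (\<lambda>x. \<gamma> x y) v z) h y + dirD (\<lambda>x. \<gamma> x h) v y)) (at y)"
  proof (rule has_derivative_linear_family[OF open_punctured, where p = "\<lambda>t. t" and q = "\<lambda>t. t"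
        and F = "\<lambda>z w. dirD (\<lambda>x. \<gamma> x w) v z", simplified])
    show "y \<noteq> 0"
      by (rule y)
    show "linear (\<lambda>w. dirD (\<lambda>x. \<gamma> x w) v z)" if "z \<noteq> 0" for z
      by (rule linear_dirD_family[OF open_punctured]) (use that linear_form differentiable_form_apply in auto)
    show "(\<lambda>z. dirD (\<lambda>x. \<gamma> x w) v z) differentiable at y" for w
      using differentiable_form[OF y, of "[v]"] by simp
  qed (rule has_derivative_ident)+
  ultimately show ?thesis
    unfolding extd_def by simp
qed

lemma dirD_extd:
  assumes y: "y \<noteq> 0"
  shows "dirD (\<lambda>z. extd \<gamma> z u v) h y = pd [h, u] (\<lambda>x. \<gamma> x v) y - pd [h, v] (\<lambda>x. \<gamma> x u) y"
proof -
  have "((\<lambda>z. extd \<gamma> z u v) has_derivative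
      (\<lambda>h. pd [h, u] (\<lambda>x. \<gamma> x v) y - pd [h, v] (\<lambda>x. \<gamma> x u) y)) (at y)"
    unfolding extd_def
    using has_derivative_diff[OF has_derivative_dirD[OF differentiable_form[OF y, of "[u]"]]
        has_derivative_dirD[OF differentiable_form[OF y, of "[v]"]]]
    by simp
  then show ?thesis
    by (rule dirD_eqI)
qed

lemma decays_extd: "decays (m + 1) (\<lambda>z. extd \<gamma> z u v)"
proof -
  have "decays (m + 1) (pd [w] (\<lambda>y. \<gamma> y w'))" for w w'
    using decays_pd[OF decays_form, of "[w]"] by simp
  from decays_lincomb[OF this this, of "-1"] show ?thesis
    unfolding extd_def by simp
qed

text \<open>The right-hand side is \<open>(2 + r \<partial>\<^sub>r) d\<gamma>(u, v)\<close>.\<close>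
lemma hamiltonian_mixed_pd:
  assumes y: "y \<noteq> 0"
  shows "pd [v, \<i> *s u] hamiltonian y - pd [u, \<i> *s v] hamiltonian y
    = 2 * extd \<gamma> y u v + dirD (\<lambda>z. extd \<gamma> z u v) y y"
proof -
  have D: "pd [a, \<i> *s b] hamiltonian y = - ((pd [a, y] (\<lambda>x. \<gamma> x b) y + pd [a] (\<lambda>x. \<gamma> x b) y) -
         (pd [a, b] (\<lambda>x. \<gamma> x y) y + pd [b] (\<lambda>x. \<gamma> x a) y))" for a b
  proof -
    have "pd [a, \<i> *s b] hamiltonian y = dirD (\<lambda>z. - extd \<gamma> z z b) a y"
      using dirD_cong_open[OF open_punctured, of y "pd [\<i> *s b] hamiltonian" "\<lambda>z. - extd \<gamma> z z b" a]
        extd_radial y by simp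
    also have "\<dots> = - ((pd [a, y] (\<lambda>x. \<gamma> x b) y + pd [a] (\<lambda>x. \<gamma> x b) y) -
         (pd [a, b] (\<lambda>x. \<gamma> x y) y + pd [b] (\<lambda>x. \<gamma> x a) y))"
      using dirD_eqI[OF has_derivative_minus[OF has_derivative_extd_radial[OF y, of b]]] by simp
    finally show ?thesis .
  qed
  have S: "pd [a, b] (\<lambda>x. \<gamma> x w) y = pd [b, a] (\<lambda>x. \<gamma> x w) y" for a b w
    using pd_commute[OF open_punctured _ decays_smooth_on[OF decays_form]] y by simp
  show ?thesis
    using D[of v u] D[of u v] S[of u y v] S[of v y u] S[of u v y] dirD_extd[OF y, of u v y]
    unfolding extd_def by simp
qed

lemma radial_integral_hamiltonian_mixed_pd:
  assumes x: "x \<noteq> 0"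
  shows "radial_integral (- 3) (pd [v, \<i> *s u] hamiltonian) x
    - radial_integral (- 3) (pd [u, \<i> *s v] hamiltonian) x = - extd \<gamma> x u v"
proof -
  have "radial_integrand (- 3) (pd [a, b] hamiltonian) x integrable_on {0..1}" for a b
    using decays_radial_integrand_integrable[OF decays_pd[OF decays_hamiltonian, of "[a, b]"]]
      decay_rate x by simp
  then have "radial_integral (- 3) (pd [v, \<i> *s u] hamiltonian) x
      - radial_integral (- 3) (pd [u, \<i> *s v] hamiltonian) x
    = integral {0..1} (\<lambda>s. radial_integrand (- 3) (pd [v, \<i> *s u] hamiltonian) x s
      - radial_integrand (- 3) (pd [u, \<i> *s v] hamiltonian) x s)"
    unfolding radial_integral_def by (simp add: integral_diff)
  also have "\<dots> = radial_integral (- 2 - 1) (\<lambda>y. 2 * extd \<gamma> y u v + dirD (\<lambda>z. extd \<gamma> z u v) y y) x"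
    unfolding radial_integral_def
  proof (rule integral_cong)
    fix s :: real
    show "radial_integrand (- 3) (pd [v, \<i> *s u] hamiltonian) x s
        - radial_integrand (- 3) (pd [u, \<i> *s v] hamiltonian) x s
      = radial_integrand (- 2 - 1) (\<lambda>y. 2 * extd \<gamma> y u v + dirD (\<lambda>z. extd \<gamma> z u v) y y) x s"
    proof (cases "s = 0")
      case False
      then have "(1 / s) *\<^sub>R x \<noteq> 0"
        using x by simp
      from hamiltonian_mixed_pd[OF this, of v u] show ?thesis
        using False by (simp add: radial_integrand_def flip: right_diff_distrib)
    qed (simp add: radial_integrand_def)
  qed
  also have "\<dots> = - extd \<gamma> x u v"
    by (rule radial_integral_euler[OF decays_extd]) (use decay_rate x in auto)
  finally show ?thesis .
qed

definition potential :: "complex^2 \<Rightarrow> real" where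
  "potential x = -2 * radial_integral (- 1) hamiltonian x"

lemma decays_radial_integral_hamiltonian: "decays (m - 1) (radial_integral (- 1) hamiltonian)"
  by (rule decays_radial_integral[OF decays_hamiltonian]) (use decay_rate in auto)

lemma decays_potential: "decays (m - 1) potential"
  unfolding potential_def[abs_def] by (rule decays_scale[OF decays_radial_integral_hamiltonian])

lemma i_ddbar_potential:
  assumes x: "x \<noteq> 0"
  shows "i_ddbar potential x u v = complex_of_real (extd \<gamma> x u v)"
proof -
  have "smooth_on (-{0}) (radial_integral (- 1) hamiltonian)"
    by (rule decays_smooth_on[OF decays_radial_integral_hamiltonian])
  then have "pd [a, b] potential x = -2 * radial_integral (- 3) (pd [a, b] hamiltonian) x" for a b
    using pd_scale[OF open_punctured, of x _ "[a, b]" "-2"] x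
      pd_radial_integral[OF decays_hamiltonian _ _ x, of "- 1" "[a, b]"] decay_rate
    unfolding potential_def[abs_def] by simp
  note pd_potential = this
  have "i_ddbar potential x u v
      = complex_of_real ((pd [v, \<i> *s u] potential x - pd [u, \<i> *s v] potential x) / 2)"
    by (rule i_ddbar_eq_pd[OF decays_smooth_on[OF decays_potential] x])
  also have "(pd [v, \<i> *s u] potential x - pd [u, \<i> *s v] potential x) / 2 = extd \<gamma> x u v"
    using radial_integral_hamiltonian_mixed_pd[OF x, of v u] unfolding pd_potential by simp
  finally show ?thesis .
qed

lemma potential_matrix_invariant:
  assumes A: "\<And>x v. x \<noteq> 0 \<Longrightarrow> \<gamma> (A *v x) (A *v v) = \<gamma> x v" and x: "x \<noteq> 0"
  shows "potential (A *v x) = potential x"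
proof -
  have "hamiltonian (r *\<^sub>R (A *v x)) = hamiltonian (r *\<^sub>R x)" if "r > 0" for r
    using A[of "r *\<^sub>R x" "\<i> *s (r *\<^sub>R x)"] x that
    by (simp add: hamiltonian_def matrix_vector_mult_scaleR_complex matrix_vector_mult_vec_smult)
  then show ?thesis
    unfolding potential_def using radial_integral_eqI by metis
qed

lemma potential_circle_invariant:
  assumes c: "cmod c = 1" and x: "x \<noteq> 0"
  shows "potential (c *s x) = potential x"
proof -
  have "hamiltonian (r *\<^sub>R (c *s x)) = hamiltonian (r *\<^sub>R x)" if "r > 0" for r
    using circle_invariant[OF c, of "r *\<^sub>R x" "\<i> *s (r *\<^sub>R x)"] x that
    by (simp add: hamiltonian_def vec_smult_scaleR mult.commute)
  then show ?thesis
    unfolding potential_def using radial_integral_eqI by metis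
qed

end

theorem proposition4p3:
  fixes \<Gamma> :: "(complex^2^2) set"
    and \<gamma> :: "complex^2 \<Rightarrow> complex^2 \<Rightarrow> real"
  assumes "finite \<Gamma>" and "\<Gamma> \<subseteq> SU2" and "mat 1 \<in> \<Gamma>"
    and "\<forall>A\<in>\<Gamma>. \<forall>B\<in>\<Gamma>. A ** B \<in> \<Gamma>"
    and "\<forall>A\<in>\<Gamma>. \<exists>B\<in>\<Gamma>. A ** B = mat 1"
    and "smooth_1form_on (- {0}) \<gamma>"
    and "\<forall>A\<in>\<Gamma>. \<forall>x v. x \<noteq> 0 \<longrightarrow> \<gamma> (A *v x) (A *v v) = \<gamma> x v"
    and "\<forall>c x v. cmod c = 1 \<longrightarrow> x \<noteq> 0 \<longrightarrow> \<gamma> (c *s x) (c *s v) = \<gamma> x v"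
    and "type11_on (- {0}) (extd \<gamma>)"
    and "\<forall>w vs. (\<lambda>x. pd vs (\<lambda>y. \<gamma> y w) x)
                 \<in> O[at_infinity](\<lambda>x. norm x powr (- 3 - real (length vs)))"
  shows "\<exists>\<psi> :: complex^2 \<Rightarrow> real.
           smooth_on (- {0}) \<psi>
         \<and> (\<forall>A\<in>\<Gamma>. \<forall>x. x \<noteq> 0 \<longrightarrow> \<psi> (A *v x) = \<psi> x)
         \<and> (\<forall>c x. cmod c = 1 \<longrightarrow> x \<noteq> 0 \<longrightarrow> \<psi> (c *s x) = \<psi> x)
         \<and> (\<forall>x u v. x \<noteq> 0 \<longrightarrow> complex_of_real (extd \<gamma> x u v) = i_ddbar \<psi> x u v)
         \<and> (\<forall>vs. (\<lambda>x. pd vs \<psi> x) \<in> O[at_infinity](\<lambda>x. norm x powr (- 2 - real (length vs))))"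
proof -
  interpret circle_invariant_form \<gamma> 3
  proof (rule circle_invariant_form.intro)
    show "linear (\<gamma> x)" if "x \<noteq> 0" for x
      using assms(6) that unfolding smooth_1form_on_def by simp
    show "decays 3 (\<lambda>y. \<gamma> y w)" for w
      using assms(6,10) unfolding decays_def smooth_1form_on_def by simp
    show "\<gamma> (c *s x) (c *s v) = \<gamma> x v" if "cmod c = 1" "x \<noteq> 0" for c x v
      using assms(8) that by blast
    show "extd \<gamma> x (Jmul u) (Jmul v) = extd \<gamma> x u v" if "x \<noteq> 0" for x u v
      using assms(9) that unfolding type11_on_def by simp
  qed simp
  show ?thesis
  proof (intro exI[of _ potential] conjI allI ballI impI)
    show "smooth_on (- {0}) potential"
      by (rule decays_smooth_on[OF decays_potential])
    show "potential (A *v x) = potential x" if "A \<in> \<Gamma>" "x \<noteq> 0" for A x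
      using potential_matrix_invariant assms(7) that by blast
    show "potential (c *s x) = potential x" if "cmod c = 1" "x \<noteq> 0" for c x
      using potential_circle_invariant that by blast
    show "complex_of_real (extd \<gamma> x u v) = i_ddbar potential x u v" if "x \<noteq> 0" for x u v
      using i_ddbar_potential[OF that] by simp
    show "pd vs potential \<in> O[at_infinity](\<lambda>x. norm x powr (- 2 - real (length vs)))" for vs
      using decays_bigo[OF decays_potential, of vs] by simp
  qed
qed

end
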